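(* Let $F\in\mathbb{R}[x,y,t,s]$ be square-free, with no factor depending only on $(t,s)$, and such that the leading coefficient of $F$ with respect to $y$ does not depend on $x$. Let $M(x,t,s)=\sqrt{D_y(F)}$ and $R(t,s)=D_x(M)$, and assume $R$ is not identically zero. Let $t_0\in\mathbb{R}$ be such that $t-t_0$ is not a factor of $R(t,s)$. Then: (i) $\mathrm{Res}_x(M,M_x)$ specializes well at $t=t_0$, i.e. $\mathrm{Res}_x(M,M_x)(t_0,s)=\mathrm{Res}_x\big(M(x,t_0,s),M_x(x,t_0,s)\big)$, where $M_x=\partial M/\partial x$; (ii) $M(x,t_0,s)$ is square-free as a polynomial in the variable $x$. The analogous statements hold for $s_0\in\mathbb{R}$ such that $s-s_0$ is not a factor of $R(t,s)$, with the specialization $s=s_0$.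
   Context: For a polynomial $G$ and a variable $w$, $D_w(G):=\mathrm{Res}_w(G,\partial G/\partial w)$, and $\sqrt{G}$ denotes the square-free part of $G$. By convention $M:=0$ if $\deg_y F=0$ and $R:=0$ if $\deg_x M=0$. *)

theory Defs
  imports "Subresultants.Resultant_Prelim" "HOL-Computational_Algebra.Computational_Algebra" "HOL-Computational_Algebra.Field_as_Ring"
begin

text \<open>Multivariate polynomials are modelled as iterated univariate polynomials.
  Variable order (innermost first): s, t, x, y.
  So  real poly                    = R[s]
      real poly poly               = R[s][t]   ~ R[t,s]
      real poly poly poly          = R[s][t][x] ~ R[x,t,s]
      real poly poly poly poly     = R[s][t][x][y] ~ R[x,y,t,s]\<close>

definition D :: "'a::{comm_ring_1,semiring_no_zero_divisors} poly \<Rightarrow> 'a" where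
  "D G = resultant G (pderiv G)"

definition sqfree_part :: "'a::{factorial_semiring,normalization_semidom_multiplicative} \<Rightarrow> 'a" where
  "sqfree_part G = (if G = 0 then 0 else \<Prod>p\<in>prime_factors G. p)"

text \<open>M(x,t,s) = sqrt(D_y F), with M := 0 if deg_y F = 0.\<close>
definition M_of :: "real poly poly poly poly \<Rightarrow> real poly poly poly" where
  "M_of F = (if degree F = 0 then 0 else sqfree_part (D F))"

definition R_of :: "real poly poly poly \<Rightarrow> real poly poly" where
  "R_of M = (if degree M = 0 then 0 else D M)"

text \<open>Specialisation t := t0 of an element of R[s][t] (gives element of R[s]).\<close>
definition eval_t :: "real \<Rightarrow> real poly poly \<Rightarrow> real poly" where
  "eval_t t0 c = poly c [:t0:]"

text \<open>Specialisation s := s0 of an element of R[s][t] (gives element of R[t]).\<close>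
definition eval_s :: "real \<Rightarrow> real poly poly \<Rightarrow> real poly" where
  "eval_s s0 c = map_poly (\<lambda>a. poly a s0) c"

definition sqfree_in_x :: "'a::comm_semiring_1 poly \<Rightarrow> bool" where
  "sqfree_in_x P \<longleftrightarrow> P \<noteq> 0 \<and> (\<forall>g. degree g > 0 \<longrightarrow> \<not> (g ^ 2 dvd P))"

end

theory Submission
  imports Defs "Subresultants.Subresultant_Gcd"
begin

text \<open>That t - t0 does not divide R says exactly that the specialised discriminant Res_x(M, M_x) does
  not vanish. Then the specialisation cannot kill the leading coefficient of M in x, since otherwise
  that of M_x dies too and the first column of the specialised Sylvester matrix is zero. So the
  x-degrees of M and M_x are preserved, the resultant commutes with the specialisation, and the
  specialised M has a nonzero discriminant, which rules out any repeated factor of positive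
  x-degree. Square-freeness of F and the conditions on its factors and leading coefficient are
  not needed for this.\<close>

lemma det_eq_0_if_zero_col:
  fixes A :: "'a :: comm_ring_1 mat"
  assumes "A \<in> carrier_mat n n" and "k < n" and "\<And>i. i < n \<Longrightarrow> A $$ (i, k) = 0"
  shows "det A = 0"
  using laplace_expansion_column[OF assms(1,2)] assms(3) by simp

lemma (in comm_ring_hom) resultant_hom_eq_0_if_lead_coeffs_vanish:
  assumes "hom (lead_coeff p) = 0" and "hom (lead_coeff q) = 0" and "degree p + degree q > 0"
  shows "hom (resultant p q) = 0"
proof -
  let ?m = "degree p" and ?n = "degree q"
  have "hom (resultant p q) = det (map_mat hom (sylvester_mat p q))"
    by (simp add: resultant_def)
  also have "\<dots> = 0"
  proof (rule det_eq_0_if_zero_col[of _ "?m + ?n" 0])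
    show "map_mat hom (sylvester_mat p q) \<in> carrier_mat (?m + ?n) (?m + ?n)"
      using sylvester_carrier_mat[of p q] by simp
    fix i assume i: "i < ?m + ?n"
    then have "sylvester_mat p q $$ (i, 0) =
      (if i = 0 \<and> 0 < ?n then lead_coeff p else if i = ?n then lead_coeff q else 0)"
      using assms(3) by (subst sylvester_index_mat) auto
    then show "map_mat hom (sylvester_mat p q) $$ (i, 0) = 0"
      using i assms by (auto split: if_splits)
  qed (use assms(3) in simp)
  finally show ?thesis .
qed

lemma lead_coeff_pderiv:
  fixes p :: "'a :: {idom, ring_char_0} poly"
  shows "lead_coeff (pderiv p) = of_nat (degree p) * lead_coeff p"
  by (cases "degree p") (simp_all add: degree_pderiv coeff_pderiv coeff_eq_0)

lemma lead_coeff_hom_nonzero_if_resultant_pderiv: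
  fixes h :: "'a :: {idom, ring_char_0} \<Rightarrow> 'b :: idom"
  assumes "idom_hom h" and "degree p > 0" and "h (resultant p (pderiv p)) \<noteq> 0"
  shows "h (lead_coeff p) \<noteq> 0"
proof
  interpret idom_hom h by fact
  assume lc: "h (lead_coeff p) = 0"
  have "h (lead_coeff (pderiv p)) = 0"
    using lc by (simp add: lead_coeff_pderiv hom_distribs)
  then have "h (resultant p (pderiv p)) = 0"
    using lc assms(2) by (intro resultant_hom_eq_0_if_lead_coeffs_vanish) auto
  with assms(3) show False by contradiction
qed

lemma sqfree_in_x_if_resultant_pderiv_nonzero:
  fixes P :: "'a :: {factorial_ring_gcd, semiring_gcd_mult_normalize} poly"
  assumes "P \<noteq> 0" and "resultant P (pderiv P) \<noteq> 0"
  shows "sqfree_in_x P"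
  unfolding sqfree_in_x_def
proof (intro conjI allI impI notI)
  show "P = 0 \<Longrightarrow> False" using assms(1) by blast
  fix g :: "'a poly"
  assume "0 < degree g" and "g ^ 2 dvd P"
  then obtain k where k: "P = g ^ 2 * k" by (elim dvdE)
  have "pderiv P = g * (g * pderiv k + k * (2 * pderiv g))"
    unfolding k by (simp add: pderiv_mult pderiv_power_Suc power2_eq_square algebra_simps)
  then have "g dvd gcd P (pderiv P)"
    using k by (simp add: power2_eq_square)
  moreover have "gcd P (pderiv P) \<noteq> 0" using assms(1) by simp
  ultimately have "degree g \<le> degree (gcd P (pderiv P))"
    by (rule dvd_imp_degree_le)
  with \<open>0 < degree g\<close> have "resultant P (pderiv P) = 0"
    by (subst resultant_0_gcd) linarith
  with assms(2) show False by contradiction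
qed

lemma resultant_pderiv_specialises:
  fixes h :: "'a :: {idom, ring_char_0} \<Rightarrow> 'b :: {factorial_ring_gcd, semiring_gcd_mult_normalize, ring_char_0}"
  assumes hom: "idom_hom h" and deg: "degree M > 0" and nz: "h (resultant M (pderiv M)) \<noteq> 0"
  shows "h (resultant M (pderiv M)) = resultant (map_poly h M) (map_poly h (pderiv M))
         \<and> sqfree_in_x (map_poly h M)"
proof -
  interpret idom_hom h by fact
  have lc: "h (lead_coeff M) \<noteq> 0"
    using lead_coeff_hom_nonzero_if_resultant_pderiv[OF assms] .
  have deg_M: "degree (map_poly h M) = degree M"
    by (rule Ring_Hom_Poly.degree_map_poly) (use lc in auto)
  have "h (lead_coeff (pderiv M)) \<noteq> 0"
    using lc deg by (simp add: lead_coeff_pderiv hom_distribs)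
  then have deg_M': "degree (map_poly h (pderiv M)) = degree (pderiv M)"
    by (intro Ring_Hom_Poly.degree_map_poly) auto
  have res: "h (resultant M (pderiv M)) = resultant (map_poly h M) (map_poly h (pderiv M))"
    using resultant_map_poly[OF deg_M deg_M'] by simp
  have "sqfree_in_x (map_poly h M)"
  proof (rule sqfree_in_x_if_resultant_pderiv_nonzero)
    show "map_poly h M \<noteq> 0" using deg_M deg by auto
    show "resultant (map_poly h M) (pderiv (map_poly h M)) \<noteq> 0"
      using res nz by (simp add: map_poly_pderiv)
  qed
  with res show ?thesis by simp
qed

lemma idom_hom_eval_t: "idom_hom (eval_t t0)"
  unfolding eval_t_def by (rule poly_hom.idom_hom_axioms)

lemma eval_t_eq_0_iff_dvd: "eval_t t0 c = 0 \<longleftrightarrow> [:[:-t0:], 1:] dvd c"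
  unfolding eval_t_def poly_eq_0_iff_dvd by simp

lemma idom_hom_eval_s: "idom_hom (eval_s s0)"
proof -
  interpret map_poly_idom_hom "\<lambda>a::real poly. poly a s0" ..
  show ?thesis unfolding eval_s_def by (rule idom_hom_axioms)
qed

lemma eval_s_eq_0_iff_dvd: "eval_s s0 c = 0 \<longleftrightarrow> [:[:-s0, 1:]:] dvd c"
proof -
  have "eval_s s0 c = 0 \<longleftrightarrow> (\<forall>n. [:-s0, 1:] dvd coeff c n)"
    unfolding eval_s_def poly_eq_iff by (simp add: poly_eq_0_iff_dvd)
  then show ?thesis by (simp add: const_poly_dvd_iff)
qed

theorem lemma11:
  fixes F :: "real poly poly poly poly"
  assumes sqf: "squarefree F"
    and no_ts_factor: "\<forall>g :: real poly poly. [:[:g:]:] dvd F \<longrightarrow> is_unit g"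
    and lc: "degree (lead_coeff F) = 0"
    and Rnz: "R_of (M_of F) \<noteq> 0"
  shows "(\<forall>t0::real. \<not> ([:[:-t0:], 1:] dvd R_of (M_of F)) \<longrightarrow>
            eval_t t0 (resultant (M_of F) (pderiv (M_of F)))
              = resultant (map_poly (eval_t t0) (M_of F)) (map_poly (eval_t t0) (pderiv (M_of F)))
            \<and> sqfree_in_x (map_poly (eval_t t0) (M_of F)))
       \<and> (\<forall>s0::real. \<not> ([:[:-s0, 1:]:] dvd R_of (M_of F)) \<longrightarrow>
            eval_s s0 (resultant (M_of F) (pderiv (M_of F)))
              = resultant (map_poly (eval_s s0) (M_of F)) (map_poly (eval_s s0) (pderiv (M_of F)))
            \<and> sqfree_in_x (map_poly (eval_s s0) (M_of F)))"
proof -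
  define M where "M = M_of F"
  have deg: "degree M > 0" and R: "R_of M = resultant M (pderiv M)"
    using Rnz unfolding M_def[symmetric] R_of_def D_def by (auto split: if_splits)
  show ?thesis unfolding M_def[symmetric] R
  proof (intro conjI allI impI)
    fix t0 :: real
    assume "\<not> [:[:-t0:], 1:] dvd resultant M (pderiv M)"
    then have "eval_t t0 (resultant M (pderiv M)) \<noteq> 0"
      by (simp add: eval_t_eq_0_iff_dvd)
    from resultant_pderiv_specialises[OF idom_hom_eval_t deg this]
    show "eval_t t0 (resultant M (pderiv M))
            = resultant (map_poly (eval_t t0) M) (map_poly (eval_t t0) (pderiv M))"
      and "sqfree_in_x (map_poly (eval_t t0) M)" by auto
  next
    fix s0 :: real
    assume "\<not> [:[:-s0, 1:]:] dvd resultant M (pderiv M)"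
    then have "eval_s s0 (resultant M (pderiv M)) \<noteq> 0"
      by (simp add: eval_s_eq_0_iff_dvd)
    from resultant_pderiv_specialises[OF idom_hom_eval_s deg this]
    show "eval_s s0 (resultant M (pderiv M))
            = resultant (map_poly (eval_s s0) M) (map_poly (eval_s s0) (pderiv M))"
      and "sqfree_in_x (map_poly (eval_s s0) M)" by auto
  qed
qed

end
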